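(* For integers $m,k\ge 0$, let $P_{m,k}=J([m]\times[k])$. Then, as formal power series, \[ \sum_{m=0}^\infty \sum_{k=0}^\infty \d(P_{m,k})\,x^m y^k = \frac{2xy}{(x^2 - 2xy + y^2 - 2x - 2y + 1)^2}. \]
   Context: For a finite poset $P$, $J(P)$ denotes the set of order ideals of $P$ ordered by inclusion (a distributive lattice); $[m]=\{1<2<\dots<m\}$ is a chain and $[m]\times[k]$ carries the componentwise order ($[0]$ is empty, so $J([0]\times[k])$ has one element). For a finite connected graph $G=(V,E)$ with graph distance $\d(p,q)$, the Wiener index is $\d(G)=\sum_{(p,q)\in V\times V}\d(p,q)$ (sum over ordered pairs). For a finite poset $P$, $\d(P)$ denotes the Wiener index of the Hasse diagram of $P$ (vertices are the elements of $P$, edges are the cover relations). *)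

theory Defs
  imports "HOL-Computational_Algebra.Formal_Power_Series"
begin

text \<open>A (simple, undirected) graph is given by a vertex set V and a symmetric
  adjacency predicate adj. A walk of length n from p to q is a list of n+1 vertices.\<close>

definition is_walk :: "'a set \<Rightarrow> ('a \<Rightarrow> 'a \<Rightarrow> bool) \<Rightarrow> 'a list \<Rightarrow> 'a \<Rightarrow> 'a \<Rightarrow> bool" where
  "is_walk V adj xs p q \<longleftrightarrow> xs \<noteq> [] \<and> set xs \<subseteq> V \<and> hd xs = p \<and> last xs = q \<and>
     (\<forall>i. Suc i < length xs \<longrightarrow> adj (xs ! i) (xs ! Suc i))"

text \<open>Graph distance: length of a shortest walk (the graphs considered are connected).\<close>
definition graph_dist :: "'a set \<Rightarrow> ('a \<Rightarrow> 'a \<Rightarrow> bool) \<Rightarrow> 'a \<Rightarrow> 'a \<Rightarrow> nat" where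
  "graph_dist V adj p q = (LEAST n. \<exists>xs. is_walk V adj xs p q \<and> length xs = Suc n)"

definition wiener :: "'a set \<Rightarrow> ('a \<Rightarrow> 'a \<Rightarrow> bool) \<Rightarrow> nat" where
  "wiener V adj = (\<Sum>(p, q) \<in> V \<times> V. graph_dist V adj p q)"

definition covers :: "'a set \<Rightarrow> ('a \<Rightarrow> 'a \<Rightarrow> bool) \<Rightarrow> 'a \<Rightarrow> 'a \<Rightarrow> bool" where
  "covers P le a b \<longleftrightarrow> a \<in> P \<and> b \<in> P \<and> le a b \<and> a \<noteq> b \<and>
     \<not> (\<exists>c\<in>P. le a c \<and> le c b \<and> c \<noteq> a \<and> c \<noteq> b)"

definition hasse_adj :: "'a set \<Rightarrow> ('a \<Rightarrow> 'a \<Rightarrow> bool) \<Rightarrow> 'a \<Rightarrow> 'a \<Rightarrow> bool" where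
  "hasse_adj P le a b \<longleftrightarrow> covers P le a b \<or> covers P le b a"

definition poset_wiener :: "'a set \<Rightarrow> ('a \<Rightarrow> 'a \<Rightarrow> bool) \<Rightarrow> nat" where
  "poset_wiener P le = wiener P (hasse_adj P le)"

definition order_ideals :: "'a set \<Rightarrow> ('a \<Rightarrow> 'a \<Rightarrow> bool) \<Rightarrow> 'a set set" where
  "order_ideals P le = {I. I \<subseteq> P \<and> (\<forall>x\<in>I. \<forall>y\<in>P. le y x \<longrightarrow> y \<in> I)}"

definition grid :: "nat \<Rightarrow> nat \<Rightarrow> (nat \<times> nat) set" where
  "grid m k = {1..m} \<times> {1..k}"

definition grid_le :: "nat \<times> nat \<Rightarrow> nat \<times> nat \<Rightarrow> bool" where
  "grid_le a b \<longleftrightarrow> fst a \<le> fst b \<and> snd a \<le> snd b"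

definition dP :: "nat \<Rightarrow> nat \<Rightarrow> nat" where
  "dP m k = poset_wiener (order_ideals (grid m k) grid_le) (\<subseteq>)"

text \<open>Bivariate series in x,y over the reals: series in y whose coefficients are series in x.\<close>
abbreviation fpsx :: "real fps fps" where "fpsx \<equiv> fps_const fps_X"
abbreviation fpsy :: "real fps fps" where "fpsy \<equiv> fps_X"

definition wiener_gf :: "real fps fps" where
  "wiener_gf = Abs_fps (\<lambda>k. Abs_fps (\<lambda>m. real (dP m k)))"

end

theory Submission
  imports Defs
begin

text \<open>
  In the Hasse diagram of \<open>J(P)\<close> every edge adds or removes a single element, and from any
  ideal one can move towards any other one by adding a minimal or removing a maximal element of
  their difference; hence the distance of two ideals is the size of their symmetric difference.

  An ideal of \<open>[m] \<times> [k]\<close> is determined by its boundary, a lattice path with \<open>m\<close> steps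
  \<open>True\<close> and \<open>k\<close> steps \<open>False\<close>. Counting the symmetric difference of two ideals along
  antidiagonals gives \<open>\<Sum>\<^sub>r |a\<^sub>r - b\<^sub>r|\<close>, where \<open>a\<^sub>r\<close> and \<open>b\<^sub>r\<close> count the
  \<open>True\<close> steps among the first \<open>r\<close> steps of the two boundary paths. Zipping the two paths gives
  a word in four letters whose height after \<open>r\<close> letters is \<open>a\<^sub>r - b\<^sub>r\<close>, returning to 0 at the
  end, so \<open>d(P\<^sub>m\<^sub>,\<^sub>k)\<close> is the total area of these bridges. Decomposing bridges and
  Motzkin paths (with two kinds of level steps) at their first return to the axis gives
  algebraic equations for the generating functions of their number, length and area, and
  eliminating the auxiliary series leaves the stated rational function.
\<close>

unbundle fps_syntax

section \<open>Distances in lattices of order ideals\<close>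

lemma is_walk_singleton [simp]: "is_walk V adj [a] p q \<longleftrightarrow> a \<in> V \<and> p = a \<and> q = a"
  by (auto simp: is_walk_def)

lemma is_walk_Cons_Cons [simp]:
  "is_walk V adj (a # b # xs) p q \<longleftrightarrow> a \<in> V \<and> p = a \<and> adj a b \<and> is_walk V adj (b # xs) b q"
proof -
  have "(\<forall>i. Suc i < length (a # b # xs) \<longrightarrow> adj ((a # b # xs) ! i) ((a # b # xs) ! Suc i)) \<longleftrightarrow>
      adj a b \<and> (\<forall>i. Suc i < length (b # xs) \<longrightarrow> adj ((b # xs) ! i) ((b # xs) ! Suc i))"
    by (auto simp: less_Suc_eq_0_disj)
  then show ?thesis by (auto simp: is_walk_def)
qed

lemma graph_dist_eqI:
  fixes d :: "'a \<Rightarrow> nat"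
  assumes "p \<in> V"
    and zero_iff: "\<And>a. a \<in> V \<Longrightarrow> d a = 0 \<longleftrightarrow> a = q"
    and lipschitz: "\<And>a b. a \<in> V \<Longrightarrow> b \<in> V \<Longrightarrow> adj a b \<Longrightarrow> d a \<le> Suc (d b)"
    and descent: "\<And>a. a \<in> V \<Longrightarrow> a \<noteq> q \<Longrightarrow> \<exists>b\<in>V. adj a b \<and> Suc (d b) = d a"
  shows "graph_dist V adj p q = d p"
proof -
  have walk_exists: "\<exists>xs. is_walk V adj xs a q \<and> length xs = Suc n" if "a \<in> V" "d a = n" for a n
    using that
  proof (induction n arbitrary: a)
    case 0
    then show ?case using zero_iff by (intro exI[of _ "[a]"]) auto
  next
    case (Suc n)
    then have "a \<noteq> q" using zero_iff[of a] by auto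
    with descent Suc.prems obtain b where "b \<in> V" "adj a b" "Suc (d b) = d a" by blast
    with Suc obtain xs where "is_walk V adj xs b q" "length xs = Suc n" by auto
    moreover from this obtain ys where "xs = b # ys" by (cases xs) (auto simp: is_walk_def)
    ultimately show ?case using Suc.prems \<open>adj a b\<close> by (intro exI[of _ "a # xs"]) auto
  qed
  have dist_le_walk_length: "d a \<le> n" if "is_walk V adj xs a q" "length xs = Suc n" for xs a n
    using that
  proof (induction xs arbitrary: a n)
    case Nil
    then show ?case by simp
  next
    case (Cons a' xs)
    show ?case
    proof (cases xs)
      case Nil
      with Cons.prems zero_iff show ?thesis by auto
    next
      case (Cons b ys)
      with Cons.prems have "a \<in> V" "adj a b" "is_walk V adj xs b q" by auto
      moreover from this(3) have "b \<in> V" by (auto simp: is_walk_def \<open>xs = b # ys\<close>)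
      ultimately show ?thesis using Cons.IH[of b "n - 1"] Cons.prems(2) lipschitz[of a b]
        by (auto simp: \<open>xs = b # ys\<close>)
    qed
  qed
  show ?thesis
    unfolding graph_dist_def
    by (rule Least_equality) (use walk_exists[OF \<open>p \<in> V\<close> refl] dist_le_walk_length in auto)
qed

lemma card_Diff_le_add:
  assumes "finite A" "finite B"
  shows "card (A - C) \<le> card (A - B) + card (B - C)"
proof -
  have "card (A - C) \<le> card ((A - B) \<union> (B - C))"
    by (rule card_mono) (use assms in auto)
  also have "\<dots> \<le> card (A - B) + card (B - C)" by (rule card_Un_le)
  finally show ?thesis .
qed

lemma ex_minimal_element:
  assumes "finite P" "transp_on P le" "antisymp_on P le" "X \<subseteq> P" "X \<noteq> {}"
  shows "\<exists>x\<in>X. \<forall>y\<in>X. le y x \<longrightarrow> y = x"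
proof -
  let ?lt = "\<lambda>x y. le x y \<and> x \<noteq> y"
  have "asymp_on X ?lt"
    using assms(3,4) by (auto simp: asymp_on_def antisymp_on_def)
  moreover have "transp_on X ?lt"
    unfolding transp_on_def
  proof (intro ballI impI)
    fix x y z assume xyz: "x \<in> X" "y \<in> X" "z \<in> X" "?lt x y" "?lt y z"
    with assms(4) have "x \<in> P" "y \<in> P" "z \<in> P" by auto
    with xyz assms(2,3) show "?lt x z"
      unfolding transp_on_def antisymp_on_def by metis
  qed
  ultimately have "\<exists>x\<in>X. \<forall>y\<in>X. y \<noteq> x \<longrightarrow> \<not> ?lt y x"
    using Finite_Set.bex_min_element[OF _ _ _ assms(5)] finite_subset[OF assms(4,1)]
    by blast
  then show ?thesis by blast
qed

lemma order_ideal_insert_minimal: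
  assumes I: "I \<in> order_ideals P le" and J: "J \<in> order_ideals P le"
    and x: "x \<in> J - I" and minimal: "\<forall>y\<in>J - I. le y x \<longrightarrow> y = x"
  shows "insert x I \<in> order_ideals P le"
  unfolding order_ideals_def
proof (intro CollectI conjI ballI impI)
  show "insert x I \<subseteq> P" using I J x by (auto simp: order_ideals_def)
  fix z y assume z: "z \<in> insert x I" and y: "y \<in> P" "le y z"
  show "y \<in> insert x I"
  proof (cases "z = x")
    case True
    with J x y have "y \<in> J" by (auto simp: order_ideals_def)
    with minimal y True show ?thesis by auto
  next
    case False
    with I z y show ?thesis by (auto simp: order_ideals_def)
  qed
qed

lemma order_ideal_remove_maximal:
  assumes I: "I \<in> order_ideals P le" and J: "J \<in> order_ideals P le"
    and x: "x \<in> I - J" and maximal: "\<forall>y\<in>I - J. le x y \<longrightarrow> y = x"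
  shows "I - {x} \<in> order_ideals P le"
  unfolding order_ideals_def
proof (intro CollectI conjI ballI impI)
  show "I - {x} \<subseteq> P" using I by (auto simp: order_ideals_def)
  fix z y assume z: "z \<in> I - {x}" and y: "y \<in> P" "le y z"
  with I have "y \<in> I" by (auto simp: order_ideals_def)
  moreover have "y \<noteq> x"
  proof
    assume "y = x"
    with J x z y have "z \<notin> J" by (auto simp: order_ideals_def)
    with maximal z y \<open>y = x\<close> show False by auto
  qed
  ultimately show "y \<in> I - {x}" by blast
qed

context
  fixes P :: "'a set" and le :: "'a \<Rightarrow> 'a \<Rightarrow> bool"
  assumes finite_carrier: "finite P"
    and transp: "transp_on P le"
    and antisymp: "antisymp_on P le"
begin

lemma finite_order_ideal: "I \<in> order_ideals P le \<Longrightarrow> finite I"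
  using finite_carrier finite_subset unfolding order_ideals_def by blast

lemma covers_order_ideals_iff:
  assumes I: "I \<in> order_ideals P le" and J: "J \<in> order_ideals P le"
  shows "covers (order_ideals P le) (\<subseteq>) I J \<longleftrightarrow> (\<exists>x. x \<notin> I \<and> J = insert x I)"
proof
  assume cover: "covers (order_ideals P le) (\<subseteq>) I J"
  then have "J - I \<noteq> {}" "J - I \<subseteq> P" using J unfolding covers_def order_ideals_def by auto
  then obtain x where x: "x \<in> J - I" and minimal: "\<forall>y\<in>J - I. le y x \<longrightarrow> y = x"
    using ex_minimal_element[OF finite_carrier transp antisymp] by meson
  have "insert x I \<in> order_ideals P le"
    by (rule order_ideal_insert_minimal[OF I J x minimal])
  with cover x have "J = insert x I" unfolding covers_def by blast
  with x show "\<exists>x. x \<notin> I \<and> J = insert x I" by blast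
next
  assume "\<exists>x. x \<notin> I \<and> J = insert x I"
  then obtain x where "x \<notin> I" "J = insert x I" by blast
  moreover have "c = I \<or> c = J" if "I \<subseteq> c" "c \<subseteq> J" for c
    using that \<open>J = insert x I\<close> by blast
  ultimately show "covers (order_ideals P le) (\<subseteq>) I J"
    using I J unfolding covers_def by blast
qed

lemma hasse_adj_order_ideals_iff:
  assumes I: "I \<in> order_ideals P le" and J: "J \<in> order_ideals P le"
  shows "hasse_adj (order_ideals P le) (\<subseteq>) I J \<longleftrightarrow> card (I - J) + card (J - I) = 1"
proof -
  have "card A + card B = 1 \<longleftrightarrow> (A = {} \<and> (\<exists>x. B = {x})) \<or> (B = {} \<and> (\<exists>x. A = {x}))"
    if "finite A" "finite B" for A B :: "'a set"
    using that by (auto simp: card_1_singleton_iff add_is_1)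
  moreover have "(\<exists>x. x \<notin> I \<and> J = insert x I) \<longleftrightarrow> I - J = {} \<and> (\<exists>x. J - I = {x})" for I J
    by blast
  ultimately show ?thesis
    using finite_order_ideal[OF I] finite_order_ideal[OF J]
    by (auto simp: hasse_adj_def covers_order_ideals_iff[OF I J] covers_order_ideals_iff[OF J I])
qed

lemma order_ideal_step_up:
  assumes I: "I \<in> order_ideals P le" and J: "J \<in> order_ideals P le" and "\<not> J \<subseteq> I"
  shows "\<exists>K\<in>order_ideals P le. hasse_adj (order_ideals P le) (\<subseteq>) I K \<and>
    Suc (card (K - J) + card (J - K)) = card (I - J) + card (J - I)"
proof -
  have "J - I \<noteq> {}" "J - I \<subseteq> P" using J \<open>\<not> J \<subseteq> I\<close> by (auto simp: order_ideals_def)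
  then obtain x where x: "x \<in> J - I" and minimal: "\<forall>y\<in>J - I. le y x \<longrightarrow> y = x"
    using ex_minimal_element[OF finite_carrier transp antisymp] by meson
  define K where "K = insert x I"
  have K: "K \<in> order_ideals P le"
    unfolding K_def by (rule order_ideal_insert_minimal[OF I J x minimal])
  then have "hasse_adj (order_ideals P le) (\<subseteq>) I K"
    using covers_order_ideals_iff[OF I K] x by (auto simp: hasse_adj_def K_def)
  moreover have "J - K = (J - I) - {x}" by (auto simp: K_def)
  then have "Suc (card (J - K)) = card (J - I)"
    using card_Suc_Diff1[of "J - I" x] x finite_order_ideal[OF J] by simp
  moreover have "K - J = I - J" using x by (auto simp: K_def)
  ultimately show ?thesis using K by auto
qed

lemma order_ideal_step_down:
  assumes I: "I \<in> order_ideals P le" and J: "J \<in> order_ideals P le" and "J \<subset> I"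
  shows "\<exists>K\<in>order_ideals P le. hasse_adj (order_ideals P le) (\<subseteq>) I K \<and>
    Suc (card (K - J) + card (J - K)) = card (I - J) + card (J - I)"
proof -
  have "I - J \<noteq> {}" "I - J \<subseteq> P" using I \<open>J \<subset> I\<close> by (auto simp: order_ideals_def)
  then have "\<exists>x\<in>I - J. \<forall>y\<in>I - J. le\<inverse>\<inverse> y x \<longrightarrow> y = x"
    using ex_minimal_element[OF finite_carrier, of "le\<inverse>\<inverse>"] transp antisymp by simp
  then obtain x where x: "x \<in> I - J" and maximal: "\<forall>y\<in>I - J. le x y \<longrightarrow> y = x"
    by auto
  define K where "K = I - {x}"
  have K: "K \<in> order_ideals P le"
    unfolding K_def by (rule order_ideal_remove_maximal[OF I J x maximal])
  then have "hasse_adj (order_ideals P le) (\<subseteq>) I K"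
    using covers_order_ideals_iff[OF K I] x by (auto simp: hasse_adj_def K_def insert_absorb)
  moreover have "K - J = (I - J) - {x}" by (auto simp: K_def)
  then have "Suc (card (K - J)) = card (I - J)"
    using card_Suc_Diff1[of "I - J" x] x finite_order_ideal[OF I] by simp
  moreover have "J - K = {}" "J - I = {}" using \<open>J \<subset> I\<close> x by (auto simp: K_def)
  then have "card (J - K) = 0" "card (J - I) = 0" by (simp_all only: card.empty)
  ultimately show ?thesis using K by auto
qed

theorem graph_dist_order_ideals:
  assumes I: "I \<in> order_ideals P le" and J: "J \<in> order_ideals P le"
  shows "graph_dist (order_ideals P le) (hasse_adj (order_ideals P le) (\<subseteq>)) I J =
    card (I - J) + card (J - I)"
proof (rule graph_dist_eqI[where d = "\<lambda>K. card (K - J) + card (J - K)", OF I])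
  fix K assume "K \<in> order_ideals P le"
  then show "card (K - J) + card (J - K) = 0 \<longleftrightarrow> K = J"
    using finite_order_ideal[of K] finite_order_ideal[OF J] by auto
next
  fix K L assume K: "K \<in> order_ideals P le" and L: "L \<in> order_ideals P le"
    and "hasse_adj (order_ideals P le) (\<subseteq>) K L"
  then have "card (K - L) + card (L - K) = 1" using hasse_adj_order_ideals_iff by blast
  moreover have "card (K - J) \<le> card (K - L) + card (L - J)" "card (J - K) \<le> card (J - L) + card (L - K)"
    using finite_order_ideal[OF K] finite_order_ideal[OF L] finite_order_ideal[OF J]
    by (simp_all add: card_Diff_le_add)
  ultimately show "card (K - J) + card (J - K) \<le> Suc (card (L - J) + card (J - L))" by linarith
next
  fix K assume K: "K \<in> order_ideals P le" and "K \<noteq> J"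
  then show "\<exists>L\<in>order_ideals P le. hasse_adj (order_ideals P le) (\<subseteq>) K L \<and>
      Suc (card (L - J) + card (J - L)) = card (K - J) + card (J - K)"
    using order_ideal_step_up[OF K J] order_ideal_step_down[OF K J] by blast
qed

corollary poset_wiener_order_ideals:
  "poset_wiener (order_ideals P le) (\<subseteq>) =
    (\<Sum>(I, J) \<in> order_ideals P le \<times> order_ideals P le. card (I - J) + card (J - I))"
  unfolding poset_wiener_def wiener_def by (rule sum.cong) (auto simp: graph_dist_order_ideals)

end

lemma finite_grid: "finite (grid m k)"
  by (simp add: grid_def)

lemma transp_grid_le: "transp grid_le"
  by (auto simp: transp_def grid_le_def)

lemma antisymp_grid_le: "antisymp grid_le"
  by (auto simp: antisymp_def grid_le_def prod_eq_iff)

lemma dP_eq_sum_card_Diff: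
  "dP m k = (\<Sum>(I, J) \<in> order_ideals (grid m k) grid_le \<times> order_ideals (grid m k) grid_le.
     card (I - J) + card (J - I))"
  unfolding dP_def
  by (rule poset_wiener_order_ideals[OF finite_grid transp_on_subset[OF transp_grid_le]
      antisymp_on_subset[OF antisymp_grid_le]]) auto

section \<open>Order ideals of a grid as lattice paths\<close>

definition lattice_paths :: "nat \<Rightarrow> nat \<Rightarrow> bool list set" where
  "lattice_paths m k = {P. length P = m + k \<and> count_list P True = m}"

definition prefix_trues :: "bool list \<Rightarrow> nat \<Rightarrow> nat" where
  "prefix_trues P r = count_list (take r P) True"

text \<open>The path is the boundary of the ideal traversed from row \<open>m\<close> to row 1: a \<open>True\<close> step
  moves to the next row, a \<open>False\<close> step to the next column.\<close>
definition path_ideal :: "nat \<Rightarrow> nat \<Rightarrow> bool list \<Rightarrow> (nat \<times> nat) set" where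
  "path_ideal m k P = {(i, t) \<in> grid m k. prefix_trues P (m - i + t) \<le> m - i}"

lemma prefix_trues_mono: "r \<le> r' \<Longrightarrow> prefix_trues P r \<le> prefix_trues P r'"
  by (auto simp: prefix_trues_def take_add dest!: le_Suc_ex)

lemma prefix_trues_add_le: "prefix_trues P (r + d) \<le> prefix_trues P r + d"
  using count_le_length[of "take d (drop r P)" True] by (simp add: prefix_trues_def take_add)

lemma prefix_trues_le: "prefix_trues P r \<le> r"
  using count_le_length[of "take r P" True] by (simp add: prefix_trues_def)

lemma prefix_trues_Suc:
  "r < length P \<Longrightarrow> prefix_trues P (Suc r) = prefix_trues P r + of_bool (P ! r)"
  by (simp add: prefix_trues_def take_Suc_conv_app_nth)

lemma prefix_trues_lattice_path:
  assumes "P \<in> lattice_paths m k"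
  shows "prefix_trues P r \<le> m" "r \<le> m + k \<Longrightarrow> r \<le> prefix_trues P r + k"
    and "prefix_trues P (m + k) = m"
proof -
  have split: "prefix_trues P r + count_list (drop r P) True = m"
  proof -
    have "count_list (take r P @ drop r P) True = m" using assms by (simp add: lattice_paths_def)
    then show ?thesis unfolding prefix_trues_def count_list_append .
  qed
  then show "prefix_trues P r \<le> m" by simp
  have "count_list (drop r P) True \<le> length (drop r P)" by (rule count_le_length)
  then show "r \<le> m + k \<Longrightarrow> r \<le> prefix_trues P r + k" using split assms by (simp add: lattice_paths_def)
  show "prefix_trues P (m + k) = m" using assms by (simp add: lattice_paths_def prefix_trues_def)
qed

lemma path_ideal_order_ideal: "path_ideal m k P \<in> order_ideals (grid m k) grid_le"
  unfolding order_ideals_def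
proof (intro CollectI conjI ballI impI)
  show "path_ideal m k P \<subseteq> grid m k" by (auto simp: path_ideal_def)
  fix x y assume x: "x \<in> path_ideal m k P" and y: "y \<in> grid m k" "grid_le y x"
  obtain i t i' t' where xy: "x = (i, t)" "y = (i', t')" by (cases x, cases y)
  with x y have "i' \<le> i" "t' \<le> t" "i \<le> m" and below: "prefix_trues P (m - i + t) \<le> m - i"
    by (auto simp: path_ideal_def grid_def grid_le_def)
  then have "prefix_trues P (m - i' + t') \<le> prefix_trues P (m - i + t') + (i - i')"
    using prefix_trues_add_le[of P "m - i + t'" "i - i'"] by (simp add: algebra_simps)
  also have "\<dots> \<le> prefix_trues P (m - i + t) + (i - i')"
    using prefix_trues_mono \<open>t' \<le> t\<close> by simp
  finally have "prefix_trues P (m - i' + t') \<le> m - i'" using below \<open>i' \<le> i\<close> \<open>i \<le> m\<close> by linarith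
  with xy y show "y \<in> path_ideal m k P" by (simp add: path_ideal_def)
qed

text \<open>On the antidiagonal \<open>m - i + t = r\<close> the difference consists of the cells with
  \<open>prefix_trues P r \<le> m - i < prefix_trues Q r\<close>.\<close>
lemma bij_betw_antidiagonals_path_ideal_Diff:
  assumes P: "P \<in> lattice_paths m k" and Q: "Q \<in> lattice_paths m k"
  shows "bij_betw (\<lambda>(r, s). (m - s, r - s)) (SIGMA r:{..<m + k}. {prefix_trues P r..<prefix_trues Q r})
    (path_ideal m k P - path_ideal m k Q)"
    (is "bij_betw ?f ?D ?X")
proof -
  let ?g = "\<lambda>(i, t). (m - i + t, m - i)"
  have bounds: "s < m" "s < r" "r - s \<le> k" if "(r, s) \<in> ?D" for r s
  proof -
    from that have "r < m + k" "prefix_trues P r \<le> s" "s < prefix_trues Q r" by auto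
    moreover have "prefix_trues Q r \<le> m" "prefix_trues Q r \<le> r"
      using prefix_trues_lattice_path(1)[OF Q] prefix_trues_le by auto
    moreover have "r \<le> prefix_trues P r + k"
      using prefix_trues_lattice_path(2)[OF P] \<open>r < m + k\<close> by simp
    ultimately show "s < m" "s < r" "r - s \<le> k" by linarith+
  qed
  show ?thesis
  proof (rule bij_betw_byWitness[where f' = ?g])
    show "\<forall>a\<in>?D. ?g (?f a) = a"
    proof
      fix a assume a: "a \<in> ?D"
      show "?g (?f a) = a"
      proof (cases a)
        case (Pair r s)
        with bounds[of r s] a have "s < m" "s < r" by auto
        with Pair show ?thesis by simp
      qed
    qed
    show "\<forall>a\<in>?X. ?f (?g a) = a" by (auto simp: path_ideal_def grid_def)
    show "?f ` ?D \<subseteq> ?X"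
    proof
      fix x assume "x \<in> ?f ` ?D"
      then obtain r s where rs: "(r, s) \<in> ?D" and x: "x = (m - s, r - s)" by auto
      have "s < m" "s < r" "r - s \<le> k" using bounds[OF rs] by simp_all
      then have "m - (m - s) + (r - s) = r" "m - (m - s) = s" "(m - s, r - s) \<in> grid m k"
        by (auto simp: grid_def)
      moreover from rs have "prefix_trues P r \<le> s" "\<not> prefix_trues Q r \<le> s" by auto
      ultimately show "x \<in> ?X" unfolding x path_ideal_def by simp
    qed
    show "?g ` ?X \<subseteq> ?D" by (auto simp: path_ideal_def grid_def)
  qed
qed

lemma card_path_ideal_Diff:
  assumes "P \<in> lattice_paths m k" and "Q \<in> lattice_paths m k"
  shows "card (path_ideal m k P - path_ideal m k Q) = (\<Sum>r<m + k. prefix_trues Q r - prefix_trues P r)"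
  using bij_betw_same_card[OF bij_betw_antidiagonals_path_ideal_Diff[OF assms]] by simp

lemma card_symdiff_path_ideal:
  assumes "P \<in> lattice_paths m k" and "Q \<in> lattice_paths m k"
  shows "int (card (path_ideal m k P - path_ideal m k Q)) + int (card (path_ideal m k Q - path_ideal m k P)) =
    (\<Sum>r<m + k. \<bar>int (prefix_trues P r) - int (prefix_trues Q r)\<bar>)"
proof -
  have "int (card (path_ideal m k P - path_ideal m k Q)) + int (card (path_ideal m k Q - path_ideal m k P)) =
      (\<Sum>r<m + k. int (prefix_trues Q r - prefix_trues P r) + int (prefix_trues P r - prefix_trues Q r))"
    by (simp add: card_path_ideal_Diff[OF assms] card_path_ideal_Diff[OF assms(2,1)] sum.distrib)
  also have "\<dots> = (\<Sum>r<m + k. \<bar>int (prefix_trues P r) - int (prefix_trues Q r)\<bar>)"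
    by (rule sum.cong) auto
  finally show ?thesis .
qed

lemma inj_on_path_ideal: "inj_on (path_ideal m k) (lattice_paths m k)"
proof (rule inj_onI)
  fix P Q assume P: "P \<in> lattice_paths m k" and Q: "Q \<in> lattice_paths m k"
    and eq: "path_ideal m k P = path_ideal m k Q"
  have "(\<Sum>r<m + k. \<bar>int (prefix_trues P r) - int (prefix_trues Q r)\<bar>) = 0"
    using card_symdiff_path_ideal[OF P Q] eq by simp
  then have "prefix_trues P r = prefix_trues Q r" if "r < m + k" for r
    using that by (subst (asm) sum_nonneg_eq_0_iff) auto
  moreover have "prefix_trues P (m + k) = prefix_trues Q (m + k)"
    using prefix_trues_lattice_path(3) P Q by simp
  ultimately have same: "prefix_trues P r = prefix_trues Q r" if "r \<le> m + k" for r
    using that le_neq_implies_less by blast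
  show "P = Q"
  proof (rule nth_equalityI)
    show "length P = length Q" using P Q by (simp add: lattice_paths_def)
    fix r assume "r < length P"
    then show "P ! r = Q ! r"
      using same[of r] same[of "Suc r"] prefix_trues_Suc[of r P] prefix_trues_Suc[of r Q] P Q
      by (simp add: lattice_paths_def of_bool_eq_iff)
  qed
qed

lemma downward_closed_eq_atLeastAtMost:
  fixes A :: "nat set"
  assumes "finite A" "0 \<notin> A" and closed: "\<And>t t'. t \<in> A \<Longrightarrow> 0 < t' \<Longrightarrow> t' \<le> t \<Longrightarrow> t' \<in> A"
  shows "A = {1..card A}"
proof (cases "A = {}")
  case False
  have "A = {1..Max A}"
    using assms Max_in[OF assms(1) False] by (auto simp: Suc_le_eq intro: gr0I)
  then show ?thesis by (metis card_atLeastAtMost diff_Suc_1)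
qed simp

lemma card_below_le_iff:
  assumes mono: "\<And>i j. i < j \<Longrightarrow> j < m \<Longrightarrow> p i < (p j :: nat)" and "s < m"
  shows "card {j. j < m \<and> p j < r} \<le> s \<longleftrightarrow> r \<le> p s"
proof
  assume "card {j. j < m \<and> p j < r} \<le> s"
  moreover have "card {..s} \<le> card {j. j < m \<and> p j < r}" if "p s < r"
  proof (rule card_mono)
    show "{..s} \<subseteq> {j. j < m \<and> p j < r}"
    proof
      fix j assume j: "j \<in> {..s}"
      then have "p j \<le> p s" using mono[of j s] \<open>s < m\<close> by (cases "j = s") auto
      with that j \<open>s < m\<close> show "j \<in> {j. j < m \<and> p j < r}" by auto
    qed
  qed simp
  ultimately show "r \<le> p s" by fastforce
next
  assume "r \<le> p s"
  have "{j. j < m \<and> p j < r} \<subseteq> {..<s}"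
  proof
    fix j assume "j \<in> {j. j < m \<and> p j < r}"
    with \<open>r \<le> p s\<close> have "j < m" "p j < p s" by auto
    moreover have "p s \<le> p j" if "s \<le> j" using mono[of s j] that \<open>j < m\<close> by (cases "s = j") auto
    ultimately show "j \<in> {..<s}" by (meson lessThan_iff not_le)
  qed
  then show "card {j. j < m \<and> p j < r} \<le> s"
    using card_mono[of "{..<s}"] by fastforce
qed

lemma count_list_map_upt: "count_list (map f [0..<n]) True = card {i. i < n \<and> f i}"
  by (simp add: count_list_eq_length_filter length_filter_conv_card eq_commute[of True])
    (rule arg_cong[where f = card], auto)

lemma order_ideal_grid_rows:
  assumes I: "I \<in> order_ideals (grid m k) grid_le"
  defines "row \<equiv> \<lambda>i. card {t. (i, t) \<in> I}"
  shows "(i, t) \<in> I \<longleftrightarrow> i \<in> {1..m} \<and> t \<in> {1..row i}"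
    and "row i \<le> k"
    and "1 \<le> i' \<Longrightarrow> i' \<le> i \<Longrightarrow> i \<le> m \<Longrightarrow> row i \<le> row i'"
proof -
  have sub: "I \<subseteq> grid m k" and down: "\<And>x y. x \<in> I \<Longrightarrow> y \<in> grid m k \<Longrightarrow> grid_le y x \<Longrightarrow> y \<in> I"
    using I by (auto simp: order_ideals_def)
  have row_sub: "{t. (i, t) \<in> I} \<subseteq> {1..k}" for i using sub by (auto simp: grid_def)
  have "{t. (i, t) \<in> I} = {1..row i}" for i
    unfolding row_def
  proof (rule downward_closed_eq_atLeastAtMost)
    show "finite {t. (i, t) \<in> I}" using row_sub[of i] finite_subset by blast
    show "0 \<notin> {t. (i, t) \<in> I}" using row_sub[of i] by auto
    fix t t' assume "t \<in> {t. (i, t) \<in> I}" "0 < t'" "t' \<le> t"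
    with sub down[of "(i, t)" "(i, t')"] show "t' \<in> {t. (i, t) \<in> I}"
      by (auto simp: grid_def grid_le_def)
  qed
  moreover have "i \<in> {1..m}" if "(i, t) \<in> I" using that sub by (auto simp: grid_def)
  ultimately show "(i, t) \<in> I \<longleftrightarrow> i \<in> {1..m} \<and> t \<in> {1..row i}" by blast
  show "row i \<le> k" unfolding row_def using card_mono[OF _ row_sub[of i]] by simp
  assume "1 \<le> i'" "i' \<le> i" "i \<le> m"
  have "{t. (i, t) \<in> I} \<subseteq> {t. (i', t) \<in> I}"
  proof
    fix t assume "t \<in> {t. (i, t) \<in> I}"
    then have "(i, t) \<in> I" by simp
    moreover from this have "(i', t) \<in> grid m k"
      using sub \<open>1 \<le> i'\<close> \<open>i' \<le> i\<close> by (auto simp: grid_def)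
    ultimately have "(i', t) \<in> I"
      using down[of "(i, t)" "(i', t)"] \<open>i' \<le> i\<close> by (simp add: grid_le_def)
    then show "t \<in> {t. (i', t) \<in> I}" by simp
  qed
  then show "row i \<le> row i'"
    unfolding row_def using row_sub[of i'] finite_subset by (intro card_mono) auto
qed

lemma prefix_trues_indicator_list:
  assumes "inj_on p {..<m}" "r \<le> n"
  shows "prefix_trues (map (\<lambda>r. \<exists>s<m. p s = r) [0..<n]) r = card {s. s < m \<and> p s < r}"
proof -
  have "prefix_trues (map (\<lambda>r. \<exists>s<m. p s = r) [0..<n]) r = card {r'. r' < r \<and> (\<exists>s<m. p s = r')}"
    using assms(2) by (simp add: prefix_trues_def take_map count_list_map_upt)
  also have "{r'. r' < r \<and> (\<exists>s<m. p s = r')} = p ` {s. s < m \<and> p s < r}" by auto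
  also have "card \<dots> = card {s. s < m \<and> p s < r}"
    using assms(1) by (intro card_image) (auto intro: inj_on_subset)
  finally show ?thesis .
qed

lemma path_ideal_surj:
  assumes I: "I \<in> order_ideals (grid m k) grid_le"
  shows "\<exists>P\<in>lattice_paths m k. path_ideal m k P = I"
proof -
  define row where "row i = card {t. (i, t) \<in> I}" for i
  note rows = order_ideal_grid_rows[OF I, folded row_def]
  txt \<open>The \<open>s\<close>-th \<open>True\<close> step of the boundary is preceded by \<open>s\<close> earlier \<open>True\<close> steps
    and by \<open>row (m - s)\<close> \<open>False\<close> steps.\<close>
  define p where "p s = s + row (m - s)" for s
  define P where "P = map (\<lambda>r. \<exists>s<m. p s = r) [0..<m + k]"
  have mono: "p i < p j" if "i < j" "j < m" for i j
  proof -
    have "row (m - i) \<le> row (m - j)" by (rule rows(3)) (use that in auto)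
    with that show ?thesis by (simp add: p_def)
  qed
  then have "inj_on p {..<m}" by (metis inj_onI lessThan_iff linorder_neqE_nat less_irrefl)
  then have prefix: "prefix_trues P r = card {s. s < m \<and> p s < r}" if "r \<le> m + k" for r
    using prefix_trues_indicator_list that unfolding P_def by blast
  have "p s < m + k" if "s < m" for s
    using rows(2)[of "m - s"] that by (simp add: p_def)
  then have "{s. s < m \<and> p s < m + k} = {..<m}" by auto
  then have "prefix_trues P (m + k) = m" using prefix[of "m + k"] by simp
  then have P: "P \<in> lattice_paths m k"
    by (simp add: lattice_paths_def P_def prefix_trues_def)
  have "(i, t) \<in> path_ideal m k P \<longleftrightarrow> (i, t) \<in> I" for i t
  proof (cases "(i, t) \<in> grid m k")
    case True
    then have "m - i < m" "m - i + t \<le> m + k" "m - (m - i) = i" by (auto simp: grid_def)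
    then have "(i, t) \<in> path_ideal m k P \<longleftrightarrow> m - i + t \<le> p (m - i)"
      using True prefix card_below_le_iff[OF mono] by (simp add: path_ideal_def)
    also have "\<dots> \<longleftrightarrow> (i, t) \<in> I"
      using True \<open>m - (m - i) = i\<close> by (simp add: p_def rows(1) grid_def) arith
    finally show ?thesis .
  next
    case False
    then show ?thesis using I by (auto simp: path_ideal_def order_ideals_def)
  qed
  then have "path_ideal m k P = I" by (auto simp: set_eq_iff)
  with P show ?thesis by blast
qed

theorem bij_betw_path_ideal:
  "bij_betw (path_ideal m k) (lattice_paths m k) (order_ideals (grid m k) grid_le)"
  unfolding bij_betw_def
  using inj_on_path_ideal path_ideal_order_ideal path_ideal_surj by blast

section \<open>Pairs of lattice paths as bridges\<close>

text \<open>A letter is a pair of simultaneous steps of two lattice paths; the height of a word is the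
  difference of their numbers of \<open>True\<close> steps.\<close>
type_synonym word = "(bool \<times> bool) list"

definition step_height :: "bool \<times> bool \<Rightarrow> int" where
  "step_height c = of_bool (fst c) - of_bool (snd c)"

definition height :: "word \<Rightarrow> int" where
  "height w = (\<Sum>c\<leftarrow>w. step_height c)"

primrec area :: "int \<Rightarrow> word \<Rightarrow> int" where
  "area h [] = 0"
| "area h (c # w) = \<bar>h\<bar> + area (h + step_height c) w"

definition xdeg :: "word \<Rightarrow> nat" where
  "xdeg w = count_list (map fst w) True"

definition ydeg :: "word \<Rightarrow> nat" where
  "ydeg w = count_list (map fst w) False"

definition bridges :: "word set" where
  "bridges = {w. height w = 0}"

lemma step_height_simps [simp]:
  "step_height (True, True) = 0" "step_height (False, False) = 0"
  "step_height (True, False) = 1" "step_height (False, True) = -1"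
  "step_height (prod.swap c) = - step_height c"
  by (simp_all add: step_height_def split: prod.split)

lemma height_simps [simp]:
  "height [] = 0" "height (c # w) = step_height c + height w" "height (v @ w) = height v + height w"
  by (simp_all add: height_def)

lemma height_map_swap [simp]: "height (map prod.swap w) = - height w"
  by (induction w) simp_all

lemma area_append [simp]: "area h (v @ w) = area h v + area (h + height v) w"
  by (induction v arbitrary: h) (auto simp: add.assoc)

lemma length_eq_xdeg_ydeg: "length w = xdeg w + ydeg w"
  by (induction w) (auto simp: xdeg_def ydeg_def)

lemma deg_simps [simp]:
  "xdeg [] = 0" "xdeg (c # w) = of_bool (fst c) + xdeg w" "xdeg (v @ w) = xdeg v + xdeg w"
  "ydeg [] = 0" "ydeg (c # w) = of_bool (\<not> fst c) + ydeg w" "ydeg (v @ w) = ydeg v + ydeg w"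
  by (simp_all add: xdeg_def ydeg_def)

lemma height_eq_count: "height w = int (count_list (map fst w) True) - int (count_list (map snd w) True)"
  by (induction w) (auto simp: step_height_def)

lemma area_eq_sum: "area h w = (\<Sum>r<length w. \<bar>h + height (take r w)\<bar>)"
proof (induction w arbitrary: h)
  case (Cons c w)
  have "(\<Sum>r<length (c # w). \<bar>h + height (take r (c # w))\<bar>) =
      \<bar>h\<bar> + (\<Sum>r<length w. \<bar>h + step_height c + height (take r w)\<bar>)"
    by (simp only: length_Cons sum.lessThan_Suc_shift) (simp add: add.assoc)
  then show ?case using Cons.IH[of "h + step_height c"] by simp
qed simp

lemma area_zip:
  assumes "P \<in> lattice_paths m k" "Q \<in> lattice_paths m k"
  shows "area 0 (zip P Q) = (\<Sum>r<m + k. \<bar>int (prefix_trues P r) - int (prefix_trues Q r)\<bar>)"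
  using assms by (simp add: area_eq_sum height_eq_count take_zip prefix_trues_def lattice_paths_def)

lemma bij_betw_zip_lattice_paths:
  "bij_betw (\<lambda>(P, Q). zip P Q) (lattice_paths m k \<times> lattice_paths m k)
    {w \<in> bridges. xdeg w = m \<and> ydeg w = k}"
proof (rule bij_betw_byWitness[where f' = "\<lambda>w. (map fst w, map snd w)"])
  show "\<forall>a\<in>lattice_paths m k \<times> lattice_paths m k. (\<lambda>w. (map fst w, map snd w)) ((\<lambda>(P, Q). zip P Q) a) = a"
    by (auto simp: lattice_paths_def)
  show "\<forall>w\<in>{w \<in> bridges. xdeg w = m \<and> ydeg w = k}. (\<lambda>(P, Q). zip P Q) (map fst w, map snd w) = w"
    by (simp add: zip_map_fst_snd)
  show "(\<lambda>(P, Q). zip P Q) ` (lattice_paths m k \<times> lattice_paths m k) \<subseteq> {w \<in> bridges. xdeg w = m \<and> ydeg w = k}"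
  proof
    fix w assume "w \<in> (\<lambda>(P, Q). zip P Q) ` (lattice_paths m k \<times> lattice_paths m k)"
    then obtain P Q where w: "w = zip P Q" and "P \<in> lattice_paths m k" "Q \<in> lattice_paths m k"
      by auto
    then have "length P = m + k" "length Q = m + k" "count_list P True = m" "count_list Q True = m"
      by (auto simp: lattice_paths_def)
    moreover from this have "count_list P False = k"
      using length_eq_xdeg_ydeg[of "zip P Q"] by (simp add: xdeg_def ydeg_def)
    ultimately show "w \<in> {w \<in> bridges. xdeg w = m \<and> ydeg w = k}"
      by (simp add: w bridges_def height_eq_count xdeg_def ydeg_def)
  qed
  show "(\<lambda>w. (map fst w, map snd w)) ` {w \<in> bridges. xdeg w = m \<and> ydeg w = k} \<subseteq>
      lattice_paths m k \<times> lattice_paths m k"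
  proof
    fix x assume "x \<in> (\<lambda>w. (map fst w, map snd w)) ` {w \<in> bridges. xdeg w = m \<and> ydeg w = k}"
    then obtain w where x: "x = (map fst w, map snd w)" and "w \<in> bridges" "xdeg w = m" "ydeg w = k"
      by blast
    then show "x \<in> lattice_paths m k \<times> lattice_paths m k"
      using length_eq_xdeg_ydeg[of w] height_eq_count[of w]
      by (simp add: lattice_paths_def bridges_def xdeg_def)
  qed
qed

theorem dP_eq_sum_area: "int (dP m k) = (\<Sum>w \<in> {w \<in> bridges. xdeg w = m \<and> ydeg w = k}. area 0 w)"
proof -
  let ?L = "lattice_paths m k" and ?J = "order_ideals (grid m k) grid_le"
  have "int (dP m k) = (\<Sum>(I, J) \<in> ?J \<times> ?J. int (card (I - J) + card (J - I)))"
    by (simp add: dP_eq_sum_card_Diff of_nat_sum case_prod_beta)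
  also have "\<dots> = (\<Sum>(P, Q) \<in> ?L \<times> ?L.
      int (card (path_ideal m k P - path_ideal m k Q) + card (path_ideal m k Q - path_ideal m k P)))"
    using sum.reindex_bij_betw[OF bij_betw_map_prod[OF bij_betw_path_ideal bij_betw_path_ideal],
        of "\<lambda>(I, J). int (card (I - J) + card (J - I))"]
    by (simp add: case_prod_beta)
  also have "\<dots> = (\<Sum>(P, Q) \<in> ?L \<times> ?L. area 0 (zip P Q))"
    by (intro sum.cong refl) (auto simp: card_symdiff_path_ideal area_zip)
  also have "\<dots> = (\<Sum>w \<in> {w \<in> bridges. xdeg w = m \<and> ydeg w = k}. area 0 w)"
    using sum.reindex_bij_betw[OF bij_betw_zip_lattice_paths, of "area 0"] by (simp add: case_prod_beta)
  finally show ?thesis .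
qed

section \<open>First-return decompositions\<close>

primrec stays_nonneg :: "int \<Rightarrow> word \<Rightarrow> bool" where
  "stays_nonneg h [] = True"
| "stays_nonneg h (c # w) = (0 \<le> h + step_height c \<and> stays_nonneg (h + step_height c) w)"

definition motzkin :: "word set" where
  "motzkin = {w. stays_nonneg 0 w \<and> height w = 0}"

lemma letter_cases: "c = (True, True) \<or> c = (False, False) \<or> c = (True, False) \<or> c = (False, True)"
  by (cases c) auto

lemma stays_nonneg_append [simp]:
  "stays_nonneg h (v @ w) \<longleftrightarrow> stays_nonneg h v \<and> stays_nonneg (h + height v) w"
  by (induction v arbitrary: h) (auto simp: add.assoc)

lemma stays_nonneg_height: "stays_nonneg h w \<Longrightarrow> 0 \<le> h \<Longrightarrow> 0 \<le> h + height w"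
proof (induction w arbitrary: h)
  case (Cons c w)
  then show ?case using Cons.IH[of "h + step_height c"] by (simp add: add.assoc)
qed simp

lemma stays_nonneg_mono: "stays_nonneg h w \<Longrightarrow> h \<le> h' \<Longrightarrow> stays_nonneg h' w"
proof (induction w arbitrary: h h')
  case (Cons c w)
  then show ?case using Cons.IH[of "h + step_height c" "h' + step_height c"] by simp
qed simp

lemma not_stays_nonneg_split:
  assumes "\<not> stays_nonneg h w" "0 \<le> h"
  shows "\<exists>u v. w = u @ (False, True) # v \<and> stays_nonneg h u \<and> h + height u = 0"
  using assms
proof (induction w arbitrary: h)
  case (Cons c w)
  show ?case
  proof (cases "0 \<le> h + step_height c")
    case True
    with Cons.prems have "\<not> stays_nonneg (h + step_height c) w" by simp
    from Cons.IH[OF this True] obtain u v where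
      "w = u @ (False, True) # v" "stays_nonneg (h + step_height c) u" "h + step_height c + height u = 0"
      by blast
    with True show ?thesis by (intro exI[of _ "c # u"] exI[of _ v]) (auto simp: add.assoc)
  next
    case False
    then have "c = (False, True)" "h = 0" using Cons.prems letter_cases[of c] by auto
    then show ?thesis by (intro exI[of _ "[]"] exI[of _ w]) auto
  qed
qed simp

lemma motzkin_first_return_unique:
  assumes "u @ (False, True) # v = u' @ (False, True) # v'" "u \<in> motzkin" "u' \<in> motzkin"
  shows "u = u' \<and> v = v'"
proof -
  have no_overshoot: False
    if "u = u' @ s" "s @ (False, True) # v = (False, True) # v'" "s \<noteq> []" "u \<in> motzkin" "u' \<in> motzkin"
    for u u' v v' s
  proof -
    from that(2,3) obtain s' where "s = (False, True) # s'" by (cases s) auto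
    with that show False by (simp add: motzkin_def)
  qed
  from assms(1) obtain s where "(u = u' @ s \<and> s @ (False, True) # v = (False, True) # v') \<or>
      (u @ s = u' \<and> (False, True) # v = s @ (False, True) # v')"
    unfolding append_eq_append_conv2 by blast
  then show ?thesis
    using no_overshoot[of u u' s v v'] no_overshoot[of u' u s v' v] assms(2,3) by (cases "s = []") auto
qed

lemma area_map_swap: "area h (map prod.swap w) = area (- h) w"
  by (induction w arbitrary: h) auto

lemma deg_map_swap:
  assumes "height w = 0"
  shows "xdeg (map prod.swap w) = xdeg w" "ydeg (map prod.swap w) = ydeg w"
proof -
  show x: "xdeg (map prod.swap w) = xdeg w"
    using height_eq_count[of w] assms by (simp add: xdeg_def comp_def)
  show "ydeg (map prod.swap w) = ydeg w"
    using length_eq_xdeg_ydeg[of w] length_eq_xdeg_ydeg[of "map prod.swap w"] x by simp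
qed

lemma area_shift:
  assumes "stays_nonneg h w" "0 \<le> h" "0 \<le> d"
  shows "area (h + d) w = d * int (length w) + area h w"
  using assms
proof (induction w arbitrary: h)
  case (Cons c w)
  then have "area (h + step_height c + d) w = d * int (length w) + area (h + step_height c) w"
    by simp
  with Cons.prems show ?case by (simp add: algebra_simps)
qed simp

lemma first_return:
  assumes "height w < 0"
  shows "\<exists>u v. w = u @ (False, True) # v \<and> u \<in> motzkin \<and> height v = height w + 1"
proof -
  have "\<not> stays_nonneg 0 w" using stays_nonneg_height[of 0 w] assms by auto
  from not_stays_nonneg_split[OF this] obtain u v
    where "w = u @ (False, True) # v" "stays_nonneg 0 u" "height u = 0" by auto
  then show ?thesis by (auto simp: motzkin_def)
qed

definition up_arch :: "word \<times> word \<Rightarrow> word" where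
  "up_arch p = (True, False) # fst p @ (False, True) # snd p"

definition down_arch :: "word \<times> word \<Rightarrow> word" where
  "down_arch p = (False, True) # map prod.swap (fst p) @ (True, False) # snd p"

lemma motzkin_decomp:
  "motzkin = {[]} \<union> (#) (True, True) ` motzkin \<union> (#) (False, False) ` motzkin \<union>
    up_arch ` (motzkin \<times> motzkin)"
proof (intro equalityI subsetI)
  fix w assume w: "w \<in> motzkin"
  show "w \<in> {[]} \<union> (#) (True, True) ` motzkin \<union> (#) (False, False) ` motzkin \<union>
    up_arch ` (motzkin \<times> motzkin)"
  proof (cases w)
    case (Cons c w')
    consider "c = (True, True)" | "c = (False, False)" | "c = (True, False)" | "c = (False, True)"
      using letter_cases by blast
    then show ?thesis
    proof cases
      case 3
      with w Cons have "height w' = -1" by (simp add: motzkin_def)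
      with first_return[of w'] obtain u v where "w' = u @ (False, True) # v" "u \<in> motzkin"
        "height v = 0" by auto
      moreover from this w Cons 3 have "stays_nonneg 0 v" by (simp add: motzkin_def)
      ultimately show ?thesis using Cons 3 by (auto simp: up_arch_def motzkin_def image_iff)
    qed (use w Cons in \<open>auto simp: motzkin_def\<close>)
  qed simp
next
  fix w assume "w \<in> {[]} \<union> (#) (True, True) ` motzkin \<union> (#) (False, False) ` motzkin \<union>
    up_arch ` (motzkin \<times> motzkin)"
  then show "w \<in> motzkin"
    using stays_nonneg_mono[of 0 _ 1] by (auto simp: motzkin_def up_arch_def)
qed

lemma bridges_decomp:
  "bridges = {[]} \<union> (#) (True, True) ` bridges \<union> (#) (False, False) ` bridges \<union>
    up_arch ` (motzkin \<times> bridges) \<union> down_arch ` (motzkin \<times> bridges)"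
proof (intro equalityI subsetI)
  fix w assume w: "w \<in> bridges"
  show "w \<in> {[]} \<union> (#) (True, True) ` bridges \<union> (#) (False, False) ` bridges \<union>
    up_arch ` (motzkin \<times> bridges) \<union> down_arch ` (motzkin \<times> bridges)"
  proof (cases w)
    case (Cons c w')
    consider "c = (True, True)" | "c = (False, False)" | "c = (True, False)" | "c = (False, True)"
      using letter_cases by blast
    then show ?thesis
    proof cases
      case 3
      with w Cons have "height w' = -1" by (simp add: bridges_def)
      with first_return[of w'] obtain u v where "w' = u @ (False, True) # v" "u \<in> motzkin"
        "height v = 0" by auto
      then show ?thesis using Cons 3 by (auto simp: up_arch_def bridges_def image_iff)
    next
      case 4
      with w Cons have "height (map prod.swap w') = -1" by (simp add: bridges_def)
      with first_return[of "map prod.swap w'"] obtain u v where "map prod.swap w' = u @ (False, True) # v"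
        "u \<in> motzkin" "height v = 0" by auto
      then have "w' = map prod.swap u @ (True, False) # map prod.swap v" "u \<in> motzkin"
        "map prod.swap v \<in> bridges"
        by (auto simp: bridges_def map_eq_append_conv)
      then show ?thesis using Cons 4 by (auto simp: down_arch_def image_iff)
    qed (use w Cons in \<open>auto simp: bridges_def\<close>)
  qed simp
next
  fix w assume "w \<in> {[]} \<union> (#) (True, True) ` bridges \<union> (#) (False, False) ` bridges \<union>
    up_arch ` (motzkin \<times> bridges) \<union> down_arch ` (motzkin \<times> bridges)"
  then show "w \<in> bridges" by (auto simp: motzkin_def bridges_def up_arch_def down_arch_def)
qed

lemma bij_betw_up_arch: "bij_betw up_arch (motzkin \<times> X) (up_arch ` (motzkin \<times> X))"
proof (rule inj_on_imp_bij_betw, rule inj_onI)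
  fix p q assume "p \<in> motzkin \<times> X" "q \<in> motzkin \<times> X" "up_arch p = up_arch q"
  then show "p = q"
    using motzkin_first_return_unique[of "fst p" "snd p" "fst q" "snd q"]
    by (auto simp: up_arch_def prod_eq_iff)
qed

lemma bij_betw_down_arch: "bij_betw down_arch (motzkin \<times> X) (down_arch ` (motzkin \<times> X))"
proof (rule inj_on_imp_bij_betw, rule inj_onI)
  fix p q assume p: "p \<in> motzkin \<times> X" and q: "q \<in> motzkin \<times> X" and eq: "down_arch p = down_arch q"
  obtain u v u' v' where uv: "p = (u, v)" "q = (u', v')" by fastforce
  from eq have "map prod.swap (down_arch p) = map prod.swap (down_arch q)" by simp
  then have "u @ (False, True) # map prod.swap v = u' @ (False, True) # map prod.swap v'"
    by (simp add: down_arch_def uv)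
  with p q uv have "u = u'" "map prod.swap v = map prod.swap v'"
    using motzkin_first_return_unique[of u "map prod.swap v" u' "map prod.swap v'"] by auto
  then show "p = q" using uv by (metis swap_swap map_map map_idI comp_apply)
qed

lemma up_arch_stats:
  assumes "u \<in> motzkin"
  shows "xdeg (up_arch (u, v)) = Suc (xdeg u + xdeg v)" "ydeg (up_arch (u, v)) = Suc (ydeg u + ydeg v)"
    and "length (up_arch (u, v)) = length u + 2 + length v"
    and "area 0 (up_arch (u, v)) = (int (length u) + area 0 u + 1) + area 0 v"
  using assms area_shift[of 0 u 1] by (simp_all add: up_arch_def motzkin_def)

lemma down_arch_stats:
  assumes "u \<in> motzkin"
  shows "xdeg (down_arch (u, v)) = Suc (xdeg u + xdeg v)" "ydeg (down_arch (u, v)) = Suc (ydeg u + ydeg v)"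
    and "area 0 (down_arch (u, v)) = (int (length u) + area 0 u + 1) + area 0 v"
  using assms area_shift[of 0 u 1] deg_map_swap[of u]
  by (simp_all add: down_arch_def motzkin_def area_map_swap)

section \<open>Bivariate generating functions\<close>

text \<open>The outer variable counts the statistic \<open>cy\<close>, as in \<open>wiener_gf\<close>.\<close>
definition bgf :: "('a \<Rightarrow> nat) \<Rightarrow> ('a \<Rightarrow> nat) \<Rightarrow> 'a set \<Rightarrow> ('a \<Rightarrow> 'b::comm_ring_1) \<Rightarrow> 'b fps fps" where
  "bgf cx cy S f = Abs_fps (\<lambda>k. Abs_fps (\<lambda>m. \<Sum>a \<in> {a \<in> S. cx a = m \<and> cy a = k}. f a))"

definition finite_fibres :: "('a \<Rightarrow> nat) \<Rightarrow> ('a \<Rightarrow> nat) \<Rightarrow> 'a set \<Rightarrow> bool" where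
  "finite_fibres cx cy S \<longleftrightarrow> (\<forall>m k. finite {a \<in> S. cx a = m \<and> cy a = k})"

lemma bgf_nth: "bgf cx cy S f $ k $ m = (\<Sum>a \<in> {a \<in> S. cx a = m \<and> cy a = k}. f a)"
  by (simp add: bgf_def)

lemma bgf_times:
  assumes fin1: "finite_fibres cx1 cy1 S1" and fin2: "finite_fibres cx2 cy2 S2"
  shows "bgf cx1 cy1 S1 f1 * bgf cx2 cy2 S2 f2 =
    bgf (\<lambda>(a, b). cx1 a + cx2 b) (\<lambda>(a, b). cy1 a + cy2 b) (S1 \<times> S2) (\<lambda>(a, b). f1 a * f2 b)"
proof (rule fps_ext, rule fps_ext)
  fix k m
  define F1 where "F1 j i = {a \<in> S1. cx1 a = j \<and> cy1 a = i}" for j i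
  define F2 where "F2 j i = {a \<in> S2. cx2 a = j \<and> cy2 a = i}" for j i
  define P where "P = {p \<in> S1 \<times> S2. (case p of (a, b) \<Rightarrow> cx1 a + cx2 b) = m \<and>
    (case p of (a, b) \<Rightarrow> cy1 a + cy2 b) = k}"
  let ?g = "\<lambda>(a, b). f1 a * f2 b"
  have "finite (F1 j i)" "finite (F2 j i)" for j i
    using fin1 fin2 by (simp_all add: finite_fibres_def F1_def F2_def)
  then have "finite (\<Union>j\<in>{0..m}. \<Union>i\<in>{0..k}. F1 j i \<times> F2 (m - j) (k - i))" by auto
  moreover have "P \<subseteq> (\<Union>j\<in>{0..m}. \<Union>i\<in>{0..k}. F1 j i \<times> F2 (m - j) (k - i))"
    by (auto simp: P_def F1_def F2_def)
  ultimately have "finite P" by (rule finite_subset[rotated])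
  have "(bgf cx1 cy1 S1 f1 * bgf cx2 cy2 S2 f2) $ k $ m =
      (\<Sum>i=0..k. \<Sum>j=0..m. (\<Sum>a\<in>F1 j i. f1 a) * (\<Sum>b\<in>F2 (m - j) (k - i). f2 b))"
    by (simp add: fps_mult_nth fps_sum_nth bgf_nth F1_def F2_def)
  also have "\<dots> = (\<Sum>i=0..k. \<Sum>j=0..m. \<Sum>p\<in>F1 j i \<times> F2 (m - j) (k - i). ?g p)"
    by (simp add: sum_product sum.cartesian_product)
  also have "\<dots> = (\<Sum>i=0..k. \<Sum>j=0..m. \<Sum>p\<in>{p \<in> P. (cy1 (fst p), cx1 (fst p)) = (i, j)}. ?g p)"
  proof (rule sum.cong[OF refl], rule sum.cong[OF refl])
    fix i j assume "i \<in> {0..k}" "j \<in> {0..m}"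
    then have "F1 j i \<times> F2 (m - j) (k - i) = {p \<in> P. (cy1 (fst p), cx1 (fst p)) = (i, j)}"
      by (auto simp: P_def F1_def F2_def)
    then show "(\<Sum>p\<in>F1 j i \<times> F2 (m - j) (k - i). ?g p) =
       (\<Sum>p\<in>{p \<in> P. (cy1 (fst p), cx1 (fst p)) = (i, j)}. ?g p)" by simp
  qed
  also have "\<dots> = (\<Sum>y\<in>{0..k} \<times> {0..m}. \<Sum>p\<in>{p \<in> P. (cy1 (fst p), cx1 (fst p)) = y}. ?g p)"
    by (simp only: sum.cartesian_product) (auto intro!: sum.cong)
  also have "\<dots> = (\<Sum>p\<in>P. ?g p)"
    by (rule sum.group[OF \<open>finite P\<close>]) (auto simp: P_def)
  also have "\<dots> = bgf (\<lambda>(a, b). cx1 a + cx2 b) (\<lambda>(a, b). cy1 a + cy2 b) (S1 \<times> S2) ?g $ k $ m"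
    by (simp add: bgf_nth P_def)
  finally show "(bgf cx1 cy1 S1 f1 * bgf cx2 cy2 S2 f2) $ k $ m =
    bgf (\<lambda>(a, b). cx1 a + cx2 b) (\<lambda>(a, b). cy1 a + cy2 b) (S1 \<times> S2) ?g $ k $ m" .
qed

lemma bgf_cong:
  assumes "\<And>a. a \<in> S \<Longrightarrow> cx a = cx' a \<and> cy a = cy' a \<and> f a = f' a"
  shows "bgf cx cy S f = bgf cx' cy' S f'"
proof -
  have "{a \<in> S. cx a = m \<and> cy a = k} = {a \<in> S. cx' a = m \<and> cy' a = k}" for m k
    using assms by auto
  then show ?thesis unfolding bgf_def using assms
    by (intro arg_cong[where f = Abs_fps] ext) (auto intro!: sum.cong)
qed

lemma bgf_reindex:
  assumes "bij_betw h A B"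
  shows "bgf cx cy B f = bgf (cx \<circ> h) (cy \<circ> h) A (f \<circ> h)"
proof (rule fps_ext, rule fps_ext)
  fix k m
  have inj: "inj_on h A" and img: "h ` {a \<in> A. cx (h a) = m \<and> cy (h a) = k} = {b \<in> B. cx b = m \<and> cy b = k}"
    using assms by (auto simp: bij_betw_def)
  have "bgf cx cy B f $ k $ m = (\<Sum>b \<in> h ` {a \<in> A. cx (h a) = m \<and> cy (h a) = k}. f b)"
    by (simp add: bgf_nth img)
  also have "\<dots> = (\<Sum>a \<in> {a \<in> A. cx (h a) = m \<and> cy (h a) = k}. f (h a))"
    by (rule sum.reindex_cong[OF _ refl refl]) (rule inj_on_subset[OF inj], auto)
  finally show "bgf cx cy B f $ k $ m = bgf (cx \<circ> h) (cy \<circ> h) A (f \<circ> h) $ k $ m"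
    by (simp add: bgf_nth)
qed

lemma bgf_Un:
  assumes "finite_fibres cx cy A" "finite_fibres cx cy B" "A \<inter> B = {}"
  shows "bgf cx cy (A \<union> B) f = bgf cx cy A f + bgf cx cy B f"
proof (rule fps_ext, rule fps_ext)
  fix k m
  have "{a \<in> A \<union> B. cx a = m \<and> cy a = k} = {a \<in> A. cx a = m \<and> cy a = k} \<union> {a \<in> B. cx a = m \<and> cy a = k}"
    by auto
  moreover have "finite {a \<in> A. cx a = m \<and> cy a = k}" "finite {a \<in> B. cx a = m \<and> cy a = k}"
    using assms by (auto simp: finite_fibres_def)
  ultimately show "bgf cx cy (A \<union> B) f $ k $ m = (bgf cx cy A f + bgf cx cy B f) $ k $ m"
    using assms(3) by (simp add: bgf_nth sum.union_disjoint disjoint_iff)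
qed

lemma bgf_add: "bgf cx cy S (\<lambda>a. f a + g a) = bgf cx cy S f + bgf cx cy S g"
  by (rule fps_ext, rule fps_ext) (simp add: bgf_nth sum.distrib)

lemma bgf_Suc_x: "bgf (\<lambda>a. Suc (cx a)) cy S f = fps_const fps_X * bgf cx cy S f"
proof (rule fps_ext, rule fps_ext)
  fix k m
  show "bgf (\<lambda>a. Suc (cx a)) cy S f $ k $ m = (fps_const fps_X * bgf cx cy S f) $ k $ m"
    by (cases m) (simp_all add: bgf_nth)
qed

lemma bgf_Suc_y: "bgf cx (\<lambda>a. Suc (cy a)) S f = fps_X * bgf cx cy S f"
proof (rule fps_ext, rule fps_ext)
  fix k m
  show "bgf cx (\<lambda>a. Suc (cy a)) S f $ k $ m = (fps_X * bgf cx cy S f) $ k $ m"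
    by (cases k) (simp_all add: bgf_nth)
qed

lemma bgf_singleton:
  assumes "cx a = 0" "cy a = 0"
  shows "bgf cx cy {a} f = fps_const (fps_const (f a))"
proof (rule fps_ext, rule fps_ext)
  fix k m
  have "{b \<in> {a}. cx b = m \<and> cy b = k} = (if m = 0 \<and> k = 0 then {a} else {})"
    using assms by auto
  then show "bgf cx cy {a} f $ k $ m = fps_const (fps_const (f a)) $ k $ m"
    by (simp add: bgf_nth)
qed

lemma bgf_zero [simp]: "bgf cx cy S (\<lambda>_. 0) = 0"
  by (rule fps_ext, rule fps_ext) (simp add: bgf_nth)

abbreviation wgf :: "word set \<Rightarrow> (word \<Rightarrow> 'b::comm_ring_1) \<Rightarrow> 'b fps fps" where
  "wgf \<equiv> bgf xdeg ydeg"

lemma finite_fibres_words: "finite_fibres xdeg ydeg S"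
  unfolding finite_fibres_def
proof (intro allI)
  fix m k
  have "{w \<in> S. xdeg w = m \<and> ydeg w = k} \<subseteq> {w. set w \<subseteq> UNIV \<and> length w = m + k}"
    using length_eq_xdeg_ydeg by auto
  moreover have "finite {w :: word. set w \<subseteq> UNIV \<and> length w = m + k}"
    by (rule finite_lists_length_eq) simp
  ultimately show "finite {w \<in> S. xdeg w = m \<and> ydeg w = k}"
    by (rule finite_subset)
qed

lemma wgf_Cons_image:
  "wgf ((#) c ` S) f = (if fst c then fps_const fps_X else fps_X) * wgf S (\<lambda>w. f (c # w))"
proof -
  have "bij_betw ((#) c) S ((#) c ` S)" by (rule inj_on_imp_bij_betw) simp
  then have "wgf ((#) c ` S) f = bgf (xdeg \<circ> (#) c) (ydeg \<circ> (#) c) S (f \<circ> (#) c)"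
    by (rule bgf_reindex)
  also have "\<dots> = (if fst c then bgf (\<lambda>w. Suc (xdeg w)) ydeg S (\<lambda>w. f (c # w))
      else bgf xdeg (\<lambda>w. Suc (ydeg w)) S (\<lambda>w. f (c # w)))"
    by (auto intro: bgf_cong)
  finally show ?thesis by (simp add: bgf_Suc_x bgf_Suc_y)
qed

lemma wgf_arches:
  assumes bij: "bij_betw h (A \<times> B) C"
    and stats: "\<And>a b. a \<in> A \<Longrightarrow> b \<in> B \<Longrightarrow> xdeg (h (a, b)) = Suc (xdeg a + xdeg b) \<and>
        ydeg (h (a, b)) = Suc (ydeg a + ydeg b) \<and> f (h (a, b)) = g1 a * g2 b + g3 a * g4 b"
  shows "wgf C f = fps_const fps_X * fps_X * (wgf A g1 * wgf B g2 + wgf A g3 * wgf B g4)"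
proof -
  let ?cx = "\<lambda>(a, b). xdeg a + xdeg b" and ?cy = "\<lambda>(a, b). ydeg a + ydeg b"
  have "wgf C f = bgf (xdeg \<circ> h) (ydeg \<circ> h) (A \<times> B) (f \<circ> h)"
    using bij by (rule bgf_reindex)
  also have "\<dots> = bgf (\<lambda>p. Suc (?cx p)) (\<lambda>p. Suc (?cy p)) (A \<times> B)
      (\<lambda>p. (\<lambda>(a, b). g1 a * g2 b) p + (\<lambda>(a, b). g3 a * g4 b) p)"
    by (rule bgf_cong) (use stats in auto)
  also have "\<dots> = fps_const fps_X * (fps_X * bgf ?cx ?cy (A \<times> B) (\<lambda>(a, b). g1 a * g2 b))
      + fps_const fps_X * (fps_X * bgf ?cx ?cy (A \<times> B) (\<lambda>(a, b). g3 a * g4 b))"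
    by (simp only: bgf_add bgf_Suc_x bgf_Suc_y)
  also have "\<dots> = fps_const fps_X * fps_X * (wgf A g1 * wgf B g2 + wgf A g3 * wgf B g4)"
    by (simp only: bgf_times[OF finite_fibres_words finite_fibres_words] algebra_simps)
  finally show ?thesis .
qed

lemma wgf_motzkin:
  "wgf motzkin f = fps_const (fps_const (f [])) + fps_const fps_X * wgf motzkin (\<lambda>w. f ((True, True) # w))
    + fps_X * wgf motzkin (\<lambda>w. f ((False, False) # w)) + wgf (up_arch ` (motzkin \<times> motzkin)) f"
proof -
  have "wgf motzkin f = wgf ({[]} \<union> (#) (True, True) ` motzkin \<union> (#) (False, False) ` motzkin \<union>
      up_arch ` (motzkin \<times> motzkin)) f"
    by (subst motzkin_decomp) (rule refl)
  also have "\<dots> = wgf {[]} f + wgf ((#) (True, True) ` motzkin) f + wgf ((#) (False, False) ` motzkin) f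
      + wgf (up_arch ` (motzkin \<times> motzkin)) f"
    by (subst bgf_Un, (rule finite_fibres_words)+, (auto simp: up_arch_def)[1])+ (rule refl)
  finally show ?thesis by (simp add: bgf_singleton wgf_Cons_image)
qed

lemma wgf_bridges:
  "wgf bridges f = fps_const (fps_const (f [])) + fps_const fps_X * wgf bridges (\<lambda>w. f ((True, True) # w))
    + fps_X * wgf bridges (\<lambda>w. f ((False, False) # w)) + wgf (up_arch ` (motzkin \<times> bridges)) f
    + wgf (down_arch ` (motzkin \<times> bridges)) f"
proof -
  have "wgf bridges f = wgf ({[]} \<union> (#) (True, True) ` bridges \<union> (#) (False, False) ` bridges \<union>
      up_arch ` (motzkin \<times> bridges) \<union> down_arch ` (motzkin \<times> bridges)) f"
    by (subst bridges_decomp) (rule refl)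
  also have "\<dots> = wgf {[]} f + wgf ((#) (True, True) ` bridges) f + wgf ((#) (False, False) ` bridges) f
      + wgf (up_arch ` (motzkin \<times> bridges)) f + wgf (down_arch ` (motzkin \<times> bridges)) f"
    by (subst bgf_Un, (rule finite_fibres_words)+, (auto simp: up_arch_def down_arch_def)[1])+ (rule refl)
  finally show ?thesis by (simp add: bgf_singleton wgf_Cons_image)
qed

section \<open>The functional equations\<close>

definition motzkin_gf :: "real fps fps" where
  "motzkin_gf = wgf motzkin (\<lambda>_. 1)"

definition motzkin_length_gf :: "real fps fps" where
  "motzkin_length_gf = wgf motzkin (\<lambda>w. real (length w))"

definition motzkin_area_gf :: "real fps fps" where
  "motzkin_area_gf = wgf motzkin (\<lambda>w. real_of_int (area 0 w))"

definition bridge_gf :: "real fps fps" where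
  "bridge_gf = wgf bridges (\<lambda>_. 1)"

definition bridge_area_gf :: "real fps fps" where
  "bridge_area_gf = wgf bridges (\<lambda>w. real_of_int (area 0 w))"

lemma motzkin_arch_area_gf:
  "wgf motzkin (\<lambda>w. real (length w) + real_of_int (area 0 w) + 1) =
    motzkin_length_gf + motzkin_area_gf + motzkin_gf"
  by (simp add: bgf_add motzkin_length_gf_def motzkin_area_gf_def motzkin_gf_def)

lemma motzkin_gf_eq: "motzkin_gf = 1 + (fpsx + fpsy) * motzkin_gf + fpsx * fpsy * motzkin_gf ^ 2"
proof -
  have "wgf (up_arch ` (motzkin \<times> motzkin)) (\<lambda>_. 1) =
      fpsx * fpsy * (wgf motzkin (\<lambda>_. 1) * wgf motzkin (\<lambda>_. 1) + wgf motzkin (\<lambda>_. 0) * wgf motzkin (\<lambda>_. 0))"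
    by (rule wgf_arches[OF bij_betw_up_arch]) (simp add: up_arch_stats)
  then show ?thesis
    unfolding motzkin_gf_def
    by (subst wgf_motzkin) (simp add: wgf_Cons_image algebra_simps power2_eq_square)
qed

lemma motzkin_length_gf_eq:
  "motzkin_length_gf = (fpsx + fpsy) * (motzkin_gf + motzkin_length_gf) +
    fpsx * fpsy * ((motzkin_length_gf + 2 * motzkin_gf) * motzkin_gf + motzkin_gf * motzkin_length_gf)"
proof -
  have "wgf (up_arch ` (motzkin \<times> motzkin)) (\<lambda>w. real (length w)) =
      fpsx * fpsy * (wgf motzkin (\<lambda>w. real (length w) + 2) * wgf motzkin (\<lambda>_. 1) +
        wgf motzkin (\<lambda>_. 1) * wgf motzkin (\<lambda>w. real (length w)))"
    by (rule wgf_arches[OF bij_betw_up_arch]) (simp add: up_arch_stats)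
  moreover have "wgf motzkin (\<lambda>w. real (length w) + 2) = motzkin_length_gf + 2 * motzkin_gf"
  proof -
    have "wgf motzkin (\<lambda>w. 2) = wgf motzkin (\<lambda>w. 1 + 1)" by simp
    also have "\<dots> = 2 * motzkin_gf" by (simp only: bgf_add motzkin_gf_def mult_2)
    finally show ?thesis by (simp add: bgf_add motzkin_length_gf_def)
  qed
  moreover have "wgf motzkin (\<lambda>w. 1 + real (length w)) = motzkin_gf + motzkin_length_gf"
    by (simp add: bgf_add motzkin_length_gf_def motzkin_gf_def)
  ultimately show ?thesis
    unfolding motzkin_length_gf_def[symmetric] motzkin_gf_def[symmetric]
    by (subst motzkin_length_gf_def, subst wgf_motzkin)
      (simp add: bgf_singleton wgf_Cons_image algebra_simps motzkin_gf_def motzkin_length_gf_def)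
qed

lemma motzkin_area_gf_eq:
  "motzkin_area_gf = (fpsx + fpsy) * motzkin_area_gf + fpsx * fpsy *
    ((motzkin_length_gf + motzkin_area_gf + motzkin_gf) * motzkin_gf + motzkin_gf * motzkin_area_gf)"
proof -
  have "wgf (up_arch ` (motzkin \<times> motzkin)) (\<lambda>w. real_of_int (area 0 w)) =
      fpsx * fpsy * (wgf motzkin (\<lambda>w. real (length w) + real_of_int (area 0 w) + 1) * wgf motzkin (\<lambda>_. 1) +
        wgf motzkin (\<lambda>_. 1) * wgf motzkin (\<lambda>w. real_of_int (area 0 w)))"
    by (rule wgf_arches[OF bij_betw_up_arch]) (simp add: up_arch_stats)
  then show ?thesis
    unfolding motzkin_arch_area_gf
    by (subst motzkin_area_gf_def, subst wgf_motzkin)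
      (simp add: bgf_singleton wgf_Cons_image algebra_simps motzkin_gf_def motzkin_area_gf_def)
qed

lemma bridge_gf_eq: "bridge_gf = 1 + (fpsx + fpsy) * bridge_gf + 2 * fpsx * fpsy * motzkin_gf * bridge_gf"
proof -
  have "wgf (up_arch ` (motzkin \<times> bridges)) (\<lambda>_. 1) =
      fpsx * fpsy * (wgf motzkin (\<lambda>_. 1) * wgf bridges (\<lambda>_. 1) + wgf motzkin (\<lambda>_. 0) * wgf bridges (\<lambda>_. 0))"
    by (rule wgf_arches[OF bij_betw_up_arch]) (simp add: up_arch_stats)
  moreover have "wgf (down_arch ` (motzkin \<times> bridges)) (\<lambda>_. 1) =
      fpsx * fpsy * (wgf motzkin (\<lambda>_. 1) * wgf bridges (\<lambda>_. 1) + wgf motzkin (\<lambda>_. 0) * wgf bridges (\<lambda>_. 0))"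
    by (rule wgf_arches[OF bij_betw_down_arch]) (simp add: down_arch_stats)
  ultimately show ?thesis
    unfolding bridge_gf_def
    by (subst wgf_bridges) (simp add: wgf_Cons_image algebra_simps motzkin_gf_def)
qed

lemma bridge_area_gf_eq:
  "bridge_area_gf = (fpsx + fpsy) * bridge_area_gf + 2 * fpsx * fpsy *
    ((motzkin_length_gf + motzkin_area_gf + motzkin_gf) * bridge_gf + motzkin_gf * bridge_area_gf)"
proof -
  have "wgf (up_arch ` (motzkin \<times> bridges)) (\<lambda>w. real_of_int (area 0 w)) =
      fpsx * fpsy * (wgf motzkin (\<lambda>w. real (length w) + real_of_int (area 0 w) + 1) * wgf bridges (\<lambda>_. 1) +
        wgf motzkin (\<lambda>_. 1) * wgf bridges (\<lambda>w. real_of_int (area 0 w)))"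
    by (rule wgf_arches[OF bij_betw_up_arch]) (simp add: up_arch_stats)
  moreover have "wgf (down_arch ` (motzkin \<times> bridges)) (\<lambda>w. real_of_int (area 0 w)) =
      fpsx * fpsy * (wgf motzkin (\<lambda>w. real (length w) + real_of_int (area 0 w) + 1) * wgf bridges (\<lambda>_. 1) +
        wgf motzkin (\<lambda>_. 1) * wgf bridges (\<lambda>w. real_of_int (area 0 w)))"
    by (rule wgf_arches[OF bij_betw_down_arch]) (simp add: down_arch_stats)
  ultimately show ?thesis
    unfolding motzkin_arch_area_gf
    by (subst bridge_area_gf_def, subst wgf_bridges)
      (simp add: bgf_singleton wgf_Cons_image algebra_simps motzkin_gf_def bridge_gf_def bridge_area_gf_def)
qed

lemma area_system_solution:
  fixes x y E L A G T :: "'a::comm_ring_1"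
  assumes e: "E = 1 + (x + y) * E + x * y * E ^ 2"
    and l: "L = (x + y) * (E + L) + x * y * ((L + 2 * E) * E + E * L)"
    and a: "A = (x + y) * A + x * y * ((L + A + E) * E + E * A)"
    and g: "G = 1 + (x + y) * G + 2 * x * y * E * G"
    and t: "T = (x + y) * T + 2 * x * y * ((L + A + E) * G + E * T)"
  shows "T * (x^2 - 2*x*y + y^2 - 2*x - 2*y + 1)^2 = 2*x*y"
proof -
  txt \<open>\<open>K\<close> inverts \<open>G\<close>, and \<open>K\<^sup>2\<close> is the discriminant of the quadratic equation for \<open>E\<close>.\<close>
  define K where "K = 1 - (x + y) - 2 * x * y * E"
  have EK: "E * (K + x * y * E) = 1" using e unfolding K_def by (simp add: algebra_simps power2_eq_square)
  have KL: "K * (L + E) = E" using l unfolding K_def by (simp add: algebra_simps)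
  have KA: "K * A = x * y * E * (L + E)" using a unfolding K_def by (simp add: algebra_simps)
  have KG: "K * G = 1" using g unfolding K_def by (simp add: algebra_simps)
  have KT: "K * T = 2 * x * y * G * (L + E + A)" using t unfolding K_def by (simp add: algebra_simps)
  have KK: "K * K = x^2 - 2*x*y + y^2 - 2*x - 2*y + 1"
  proof -
    have "K * K = (1 - (x + y))^2 - 4 * x * y * (E * (1 - (x + y)) - x * y * E * E)"
      unfolding K_def by (simp add: algebra_simps power2_eq_square)
    also have "E * (1 - (x + y)) - x * y * E * E = 1" using EK unfolding K_def by (simp add: algebra_simps)
    finally show ?thesis by (simp add: algebra_simps power2_eq_square)
  qed
  have KKS: "K * K * (L + E + A) = 1"
  proof -
    have "K * K * (L + E + A) = K * (K * (L + E)) + K * (K * A)" by (simp add: algebra_simps)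
    also have "\<dots> = K * E + K * (x * y * E * (L + E))" using KL KA by simp
    also have "\<dots> = K * E + x * y * E * (K * (L + E))" by (simp add: algebra_simps)
    also have "\<dots> = E * (K + x * y * E)" using KL by (simp add: algebra_simps)
    finally show ?thesis using EK by simp
  qed
  have "T * (K * K)^2 = 2 * x * y * (K * G) * (K * K * (L + E + A))"
    using KT by (simp add: algebra_simps power2_eq_square)
  then show ?thesis using KG KKS KK by simp
qed

lemma fps_fps_mult_inverse:
  fixes f :: "'a::field fps fps"
  assumes "f $ 0 $ 0 \<noteq> 0"
  shows "f * inverse f = 1"
proof -
  have "f $ 0 * inverse (f $ 0) = 1" using assms by (rule inverse_mult_eq_1')
  then have "f * fps_right_inverse f (inverse (f $ 0)) = 1" by (rule fps_right_inverse)
  then show ?thesis by (simp add: fps_inverse_def)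
qed

lemma wiener_gf_eq_bridge_area_gf: "wiener_gf = bridge_area_gf"
proof (rule fps_ext, rule fps_ext)
  fix k m
  have "real (dP m k) = real_of_int (\<Sum>w \<in> {w \<in> bridges. xdeg w = m \<and> ydeg w = k}. area 0 w)"
    by (metis dP_eq_sum_area of_int_of_nat_eq)
  then show "wiener_gf $ k $ m = bridge_area_gf $ k $ m"
    by (simp add: wiener_gf_def bridge_area_gf_def bgf_nth)
qed

theorem theorem1p1:
  shows "wiener_gf =
    2 * fpsx * fpsy *
      inverse ((fpsx ^ 2 - 2 * fpsx * fpsy + fpsy ^ 2 - 2 * fpsx - 2 * fpsy + 1) ^ 2)"
proof -
  let ?D = "(fpsx ^ 2 - 2 * fpsx * fpsy + fpsy ^ 2 - 2 * fpsx - 2 * fpsy + 1 :: real fps fps) ^ 2"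
  have "?D $ 0 $ 0 = 1" by (simp add: power2_eq_square fps_mult_nth numeral_fps_const)
  then have inv: "?D * inverse ?D = 1" by (intro fps_fps_mult_inverse) simp
  have "wiener_gf = bridge_area_gf * (?D * inverse ?D)"
    by (simp only: wiener_gf_eq_bridge_area_gf inv mult_1_right)
  also have "\<dots> = bridge_area_gf * ?D * inverse ?D"
    by (rule mult.assoc[symmetric])
  also have "bridge_area_gf * ?D = 2 * fpsx * fpsy"
    by (rule area_system_solution[OF motzkin_gf_eq motzkin_length_gf_eq motzkin_area_gf_eq
          bridge_gf_eq bridge_area_gf_eq])
  finally show ?thesis .
qed

end
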